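(* Let $K,L,T\ge 2$, $1\le r\le T$ and $1\le s\le\min(T,K+r)$ be integers, and let $\mathrm{DOG}_{rs}(K,L,T)$ be the integer vectors $\boldsymbol{\alpha}^{(p)}=(0,1,\dots,K-1)$, $\boldsymbol{\alpha}^{(s)}=K+\mathrm{GAP}(T,K+r,r)$, $\boldsymbol{\beta}^{(p)}=(K+r)\cdot(0,1,\dots,L-1)$, $\boldsymbol{\beta}^{(s)}=(K+r)(L-1)+K+\mathrm{GAP}(T,K+r,s)$. Then $(\boldsymbol{\alpha}^{(p)},\boldsymbol{\alpha}^{(s)},\boldsymbol{\beta}^{(p)},\boldsymbol{\beta}^{(s)})$ is a private and decodable degree table for parameters $K,L,T$ with $N=|\mathcal{TL}\cup\mathcal{TR}\cup\mathcal{BL}\cup\mathcal{BR}|$ unique entries.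
   Context: $\mathrm{GAP}(\ell,x,r)\in\mathbb{Z}^\ell$ is the vector of the first $\ell$ terms of $(0,1,\dots,r-1,\;x,\dots,x+r-1,\;2x,\dots,2x+r-1,\dots)$; adding a scalar to a vector adds it entrywise. For integer vectors $\boldsymbol{\alpha}^{(p)}\in\mathbb{Z}^K,\boldsymbol{\alpha}^{(s)}\in\mathbb{Z}^T,\boldsymbol{\beta}^{(p)}\in\mathbb{Z}^L,\boldsymbol{\beta}^{(s)}\in\mathbb{Z}^T$, with $\{\mathbf v\}$ the set of entries of $\mathbf v$ and integer sumsets $\mathcal A+\mathcal B=\{a+b\}$, let $\mathcal{TL}=\{\boldsymbol{\alpha}^{(p)}\}+\{\boldsymbol{\beta}^{(p)}\}$, $\mathcal{TR}=\{\boldsymbol{\alpha}^{(p)}\}+\{\boldsymbol{\beta}^{(s)}\}$, $\mathcal{BL}=\{\boldsymbol{\alpha}^{(s)}\}+\{\boldsymbol{\beta}^{(p)}\}$, $\mathcal{BR}=\{\boldsymbol{\alpha}^{(s)}\}+\{\boldsymbol{\beta}^{(s)}\}$. The tuple is a private and decodable degree table for $K,L,T$ with $N$ unique entries if: (I) $|\mathcal{TL}\cup\mathcal{TR}\cup\mathcal{BL}\cup\mathcal{BR}|=N$; (II) $|\mathcal{TL}|=KL$; (III) $\mathcal{TL}\cap\mathcal{TR}=\mathcal{TL}\cap\mathcal{BL}=\mathcal{TL}\cap\mathcal{BR}=\emptyset$; (IV) the concatenation $\boldsymbol{\alpha}^{(p)}\|\boldsymbol{\alpha}^{(s)}$ has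 $K+T$ distinct entries and $\boldsymbol{\beta}^{(p)}\|\boldsymbol{\beta}^{(s)}$ has $L+T$ distinct entries. *)

theory Defs
  imports Main
begin

text \<open>Integer vectors are represented as lists of integers.
  GAP l x r: the first l terms of 0,1,..,r-1, x,..,x+r-1, 2x,..,2x+r-1, ...;
  the i-th term (0-indexed) is (i div r) * x + (i mod r).\<close>
definition GAP :: "nat \<Rightarrow> int \<Rightarrow> nat \<Rightarrow> int list" where
  "GAP l x r = map (\<lambda>i. int (i div r) * x + int (i mod r)) [0..<l]"

definition vadd :: "int \<Rightarrow> int list \<Rightarrow> int list" where
  "vadd c v = map (\<lambda>a. c + a) v"

definition sumset :: "int set \<Rightarrow> int set \<Rightarrow> int set" where
  "sumset A B = {a + b | a b. a \<in> A \<and> b \<in> B}"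

definition private_decodable_degree_table ::
  "int list \<Rightarrow> int list \<Rightarrow> int list \<Rightarrow> int list \<Rightarrow> nat \<Rightarrow> nat \<Rightarrow> nat \<Rightarrow> nat \<Rightarrow> bool" where
  "private_decodable_degree_table ap as bp bs K L T N \<longleftrightarrow>
     length ap = K \<and> length as = T \<and> length bp = L \<and> length bs = T \<and>
     (let TL = sumset (set ap) (set bp); TR = sumset (set ap) (set bs);
          BL = sumset (set as) (set bp); BR = sumset (set as) (set bs) in
       card (TL \<union> TR \<union> BL \<union> BR) = N \<and>
       card TL = K * L \<and>
       TL \<inter> TR = {} \<and> TL \<inter> BL = {} \<and> TL \<inter> BR = {} \<and>
       distinct (ap @ as) \<and> distinct (bp @ bs))"

definition DOG_ap :: "nat \<Rightarrow> int list" where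
  "DOG_ap K = map int [0..<K]"
definition DOG_as :: "nat \<Rightarrow> nat \<Rightarrow> nat \<Rightarrow> int list" where
  "DOG_as K T r = vadd (int K) (GAP T (int K + int r) r)"
definition DOG_bp :: "nat \<Rightarrow> nat \<Rightarrow> nat \<Rightarrow> int list" where
  "DOG_bp K L r = map (\<lambda>j. (int K + int r) * int j) [0..<L]"
definition DOG_bs :: "nat \<Rightarrow> nat \<Rightarrow> nat \<Rightarrow> nat \<Rightarrow> nat \<Rightarrow> int list" where
  "DOG_bs K L T r s = vadd ((int K + int r) * (int L - 1) + int K) (GAP T (int K + int r) s)"

end

theory Submission
  imports Defs
begin

text \<open>Read every entry in base \<open>M = K + r\<close>. The top-left block \<open>{a + M j | a < K, j < L}\<close>
  consists of numbers with last digit below \<open>K\<close>, and its \<open>K L\<close> elements are distinct by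
  uniqueness of base-\<open>M\<close> expansions. The entries of \<open>\<alpha>\<^sup>s\<close> have last digit in
  \<open>[K, K + r)\<close>, and adding a multiple of \<open>M\<close> keeps it there, so the bottom-left block avoids the
  top-left one. Every entry of \<open>\<beta>\<^sup>s\<close> is at least \<open>M (L - 1) + K\<close>, which exceeds every
  element of the top-left block, so both right-hand blocks lie above it.\<close>

lemma base_expansion_unique:
  fixes x q q' t t' :: int
  assumes "0 \<le> t" "t < x" "0 \<le> t'" "t' < x" "q * x + t = q' * x + t'"
  shows "q = q' \<and> t = t'"
proof
  show "q = q'"
    using arg_cong[OF assms(5), of "\<lambda>n. n div x"] assms(1-4) by simp
  show "t = t'"
    using arg_cong[OF assms(5), of "\<lambda>n. n mod x"] assms(1-4) by simp
qed

lemma sumset_lower_bound: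
  fixes A B :: "int set"
  assumes "\<forall>a\<in>A. 0 \<le> a" "\<forall>b\<in>B. c \<le> b" "x \<in> sumset A B"
  shows "c \<le> x"
  using assms unfolding sumset_def by force

lemma length_GAP [simp]: "length (GAP l x r) = l"
  by (simp add: GAP_def)

lemma set_GAP: "set (GAP l x r) = (\<lambda>i. int (i div r) * x + int (i mod r)) ` {..<l}"
  by (simp add: GAP_def atLeast0LessThan)

lemma GAP_digits:
  assumes "v \<in> set (GAP l x r)" "0 < r"
  obtains q t where "v = q * x + t" "0 \<le> q" "0 \<le> t" "t < int r"
  using assms unfolding set_GAP by fastforce

lemma distinct_GAP:
  assumes "0 < r" "int r \<le> x"
  shows "distinct (GAP l x r)"
  unfolding GAP_def distinct_map
proof (intro conjI inj_onI)
  fix i j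
  assume "int (i div r) * x + int (i mod r) = int (j div r) * x + int (j mod r)"
  moreover have "int (i mod r) < x" "int (j mod r) < x"
    using assms(2) mod_less_divisor[OF assms(1), of i] mod_less_divisor[OF assms(1), of j]
    by linarith+
  ultimately have "i div r = j div r \<and> i mod r = j mod r"
    using base_expansion_unique by (metis of_nat_0_le_iff of_nat_eq_iff)
  then show "i = j"
    by (metis div_mult_mod_eq)
qed simp

lemma length_vadd [simp]: "length (vadd c v) = length v"
  by (simp add: vadd_def)

lemma set_vadd: "set (vadd c v) = (+) c ` set v"
  by (simp add: vadd_def)

lemma distinct_vadd: "distinct (vadd c v) \<longleftrightarrow> distinct v"
  by (simp add: vadd_def distinct_map)

lemma set_DOG_ap: "set (DOG_ap K) = int ` {..<K}"
  by (simp add: DOG_ap_def atLeast0LessThan)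

lemma set_DOG_bp: "set (DOG_bp K L r) = (\<lambda>j. (int K + int r) * int j) ` {..<L}"
  by (simp add: DOG_bp_def atLeast0LessThan)

lemma DOG_as_digit:
  assumes "x \<in> set (DOG_as K T r)" "0 < r"
  shows "0 \<le> x" "int K \<le> x mod (int K + int r)"
proof -
  obtain g where g: "g \<in> set (GAP T (int K + int r) r)" and x: "x = int K + g"
    using assms(1) unfolding DOG_as_def set_vadd by blast
  obtain q t where "g = q * (int K + int r) + t" "0 \<le> q" "0 \<le> t" "t < int r"
    using GAP_digits[OF g assms(2)] .
  with x have "x = q * (int K + int r) + (int K + t)" "0 \<le> q" "0 \<le> t" "t < int r"
    by simp_all
  then show "0 \<le> x" "int K \<le> x mod (int K + int r)"
    by simp_all
qed

lemma DOG_bs_lower_bound: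
  assumes "x \<in> set (DOG_bs K L T r s)" "0 < s"
  shows "(int K + int r) * (int L - 1) + int K \<le> x"
proof -
  obtain g where g: "g \<in> set (GAP T (int K + int r) s)"
    and x: "x = (int K + int r) * (int L - 1) + int K + g"
    using assms(1) unfolding DOG_bs_def set_vadd by blast
  obtain q t where "g = q * (int K + int r) + t" "0 \<le> q" "0 \<le> t"
    using GAP_digits[OF g assms(2)] .
  then have "0 \<le> g"
    by simp
  with x show ?thesis
    by simp
qed

lemma distinct_DOG:
  assumes "0 < K" "0 < r" "0 < s" "s \<le> K + r"
  shows "distinct (DOG_ap K @ DOG_as K T r)" "distinct (DOG_bp K L r @ DOG_bs K L T r s)"
proof -
  have "set (DOG_ap K) \<inter> set (DOG_as K T r) = {}"
    using DOG_as_digit[OF _ assms(2)] unfolding set_DOG_ap by fastforce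
  then show "distinct (DOG_ap K @ DOG_as K T r)"
    using assms distinct_GAP by (simp add: DOG_ap_def DOG_as_def distinct_vadd distinct_map)
next
  have "b \<le> (int K + int r) * (int L - 1)" if "b \<in> set (DOG_bp K L r)" for b
    using that unfolding set_DOG_bp by (auto intro!: mult_left_mono)
  then have "set (DOG_bp K L r) \<inter> set (DOG_bs K L T r s) = {}"
    using DOG_bs_lower_bound[OF _ assms(3)] assms(1) by fastforce
  then show "distinct (DOG_bp K L r @ DOG_bs K L T r s)"
    using assms distinct_GAP
    by (simp add: DOG_bp_def DOG_bs_def distinct_vadd distinct_map inj_on_def)
qed

lemma sumset_DOG_ap_bp:
  "sumset (set (DOG_ap K)) (set (DOG_bp K L r))
     = (\<lambda>(a, j). int a + (int K + int r) * int j) ` ({..<K} \<times> {..<L})"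
  unfolding sumset_def set_DOG_ap set_DOG_bp by auto

lemma card_sumset_DOG_ap_bp:
  "card (sumset (set (DOG_ap K)) (set (DOG_bp K L r))) = K * L"
proof -
  have "inj_on (\<lambda>(a, j). int a + (int K + int r) * int j) ({..<K} \<times> {..<L})"
  proof (rule inj_onI, clarsimp)
    fix a j a' j'
    assume "a < K" "a' < K" "int a + (int K + int r) * int j = int a' + (int K + int r) * int j'"
    then show "a = a' \<and> j = j'"
      using base_expansion_unique[of "int a" "int K + int r" "int a'" "int j" "int j'"]
      by (simp add: algebra_simps)
  qed
  then show ?thesis
    unfolding sumset_DOG_ap_bp by (simp add: card_image card_cartesian_product)
qed

lemma sumset_DOG_ap_bp_bounds:
  assumes "x \<in> sumset (set (DOG_ap K)) (set (DOG_bp K L r))"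
  shows "x mod (int K + int r) < int K" "x < (int K + int r) * (int L - 1) + int K"
proof -
  obtain a j where a: "a < K" and j: "j < L" and x: "x = int j * (int K + int r) + int a"
    using assms unfolding sumset_DOG_ap_bp by (auto simp: algebra_simps)
  then show "x mod (int K + int r) < int K"
    by simp
  have "int j * (int K + int r) \<le> (int L - 1) * (int K + int r)"
    using j by (intro mult_right_mono) simp_all
  with a x have "x < (int L - 1) * (int K + int r) + int K"
    by linarith
  then show "x < (int K + int r) * (int L - 1) + int K"
    by (simp add: mult.commute)
qed

lemma sumset_DOG_as_bp_digit:
  assumes "x \<in> sumset (set (DOG_as K T r)) (set (DOG_bp K L r))" "0 < r"
  shows "int K \<le> x mod (int K + int r)"
  using assms DOG_as_digit unfolding sumset_def set_DOG_bp by (auto simp: mult.commute)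

theorem lemma3:
  fixes K L T r s :: nat
  assumes "K \<ge> 2" "L \<ge> 2" "T \<ge> 2"
    and "1 \<le> r" "r \<le> T"
    and "1 \<le> s" "s \<le> min T (K + r)"
  shows "private_decodable_degree_table (DOG_ap K) (DOG_as K T r) (DOG_bp K L r) (DOG_bs K L T r s) K L T
           (card (let ap = DOG_ap K; as = DOG_as K T r; bp = DOG_bp K L r; bs = DOG_bs K L T r s in
                  sumset (set ap) (set bp) \<union> sumset (set ap) (set bs) \<union>
                  sumset (set as) (set bp) \<union> sumset (set as) (set bs)))"
proof -
  have pos: "0 < K" "0 < r" "0 < s" "s \<le> K + r"
    using assms by simp_all
  let ?TL = "sumset (set (DOG_ap K)) (set (DOG_bp K L r))"
  let ?bound = "(int K + int r) * (int L - 1) + int K"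
  have nonneg: "\<forall>a \<in> set (DOG_ap K). 0 \<le> a" "\<forall>a \<in> set (DOG_as K T r). 0 \<le> a"
    using DOG_as_digit(1)[OF _ pos(2)] by (auto simp: set_DOG_ap)
  have "\<forall>b \<in> set (DOG_bs K L T r s). ?bound \<le> b"
    using DOG_bs_lower_bound pos by blast
  then have right_above: "?bound \<le> x"
    if "x \<in> sumset (set (DOG_ap K)) (set (DOG_bs K L T r s)) \<or>
        x \<in> sumset (set (DOG_as K T r)) (set (DOG_bs K L T r s))" for x
    using that nonneg sumset_lower_bound by blast
  have "?TL \<inter> sumset (set (DOG_ap K)) (set (DOG_bs K L T r s)) = {}"
       "?TL \<inter> sumset (set (DOG_as K T r)) (set (DOG_bs K L T r s)) = {}"
    using right_above sumset_DOG_ap_bp_bounds(2) by (meson disjoint_iff not_le)+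
  moreover have "?TL \<inter> sumset (set (DOG_as K T r)) (set (DOG_bp K L r)) = {}"
    using sumset_DOG_as_bp_digit[OF _ pos(2)] sumset_DOG_ap_bp_bounds(1)
    by (meson disjoint_iff not_le)
  ultimately show ?thesis
    unfolding private_decodable_degree_table_def Let_def
    using card_sumset_DOG_ap_bp distinct_DOG[OF pos]
    by (simp add: DOG_ap_def DOG_as_def DOG_bp_def DOG_bs_def)
qed

end
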